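(* Let $E\subset\mathbb{R}^2$, $E_o:=\{(x,y)\in E:x\neq y\}$, and let $C\subseteq E_o$ be connected in $E_o$. If $C$ contains an identifying cycle, then uniqueness and convergence of portfolio positions hold at every point of $C$.
   Context: A semistatic strategy on $E$ is a function $v:E\to\mathbb{R}$ for which there exist $h,g:\mathbb{R}\to\mathbb{R}$ with $v(x,y)=h(x)(y-x)+g(y)$ for all $(x,y)\in E$; such $(h,g)$ is a portfolio position of $v$. A path in $E_o$ from $(x,y)\in E_o$ to $(x',y')\in E_o$ is a tuple $(x_i,y_i)_{i=1}^k\in E_o^k$, $k\in\mathbb{N}_0$, such that all points $(x,y),(x_1,y),(x_1,y_1),(x_2,y_1),\dots,(x_k,y_k),(x',y_k),(x',y')$ belong to $E_o$. Two points of $E_o$ are connected if there is a path between them; $C\subseteq E_o$ is connected if any two of its points are connected. A cycle is a path from a point to itself; a cycle $(x_i,y_i)_{i=1}^k$ is identifying if $\prod_{i=1}^k(y_i-x_i)-\prod_{i=1}^k(y_i-x_{i+1})\neq0$ with $x_{k+1}:=x_1$; $C$ contains the cycle if all its points lie in $C$. Uniqueness of portfolio positions holds at $(x,y)\in E$ if for every semistatic strategy $v$ on $E$, the values $h(x)$ and $g(y)$ are the same for all portfolio positions $(h,g)$ of $v$. In that situation, convergence of portfolio positions holds at $(x,y)$ if for any semistatic strategies $v_n$ on $E$ converging pointwise on $E$, with portfolio positions $(h_n,g_n)$, the sequences $h_n(x)$ and $g_n(y)$ converge. *)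

theory Defs
  imports Complex_Main
begin

type_synonym point = "real \<times> real"

definition Eo :: "point set \<Rightarrow> point set" where
  "Eo E = {p \<in> E. fst p \<noteq> snd p}"

definition portfolio_position ::
  "point set \<Rightarrow> (point \<Rightarrow> real) \<Rightarrow> (real \<Rightarrow> real) \<Rightarrow> (real \<Rightarrow> real) \<Rightarrow> bool" where
  "portfolio_position E v h g \<longleftrightarrow>
     (\<forall>(x, y) \<in> E. v (x, y) = h x * (y - x) + g y)"

definition semistatic :: "point set \<Rightarrow> (point \<Rightarrow> real) \<Rightarrow> bool" where
  "semistatic E v \<longleftrightarrow> (\<exists>h g. portfolio_position E v h g)"

definition is_path :: "point set \<Rightarrow> point \<Rightarrow> point list \<Rightarrow> point \<Rightarrow> bool" where
  "is_path E p ps q \<longleftrightarrow>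
     (let xs = fst p # map fst ps @ [fst q]; ys = snd p # map snd ps @ [snd q] in
       (\<forall>i \<le> length ps + 1. (xs ! i, ys ! i) \<in> Eo E) \<and>
       (\<forall>i \<le> length ps. (xs ! (i + 1), ys ! i) \<in> Eo E))"

definition connected_pts :: "point set \<Rightarrow> point \<Rightarrow> point \<Rightarrow> bool" where
  "connected_pts E p q \<longleftrightarrow> (\<exists>ps. is_path E p ps q)"

definition connected_in_Eo :: "point set \<Rightarrow> point set \<Rightarrow> bool" where
  "connected_in_Eo E C \<longleftrightarrow> C \<subseteq> Eo E \<and> (\<forall>p\<in>C. \<forall>q\<in>C. connected_pts E p q)"

definition is_cycle :: "point set \<Rightarrow> point list \<Rightarrow> bool" where
  "is_cycle E ps \<longleftrightarrow> ps \<noteq> [] \<and> is_path E (hd ps) ps (hd ps)"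

definition identifying :: "point list \<Rightarrow> bool" where
  "identifying ps \<longleftrightarrow>
     (let k = length ps; xs = map fst ps; ys = map snd ps in
       (\<Prod>i<k. ys ! i - xs ! i) - (\<Prod>i<k. ys ! i - xs ! ((i + 1) mod k)) \<noteq> 0)"

definition contains_cycle :: "point set \<Rightarrow> point set \<Rightarrow> point list \<Rightarrow> bool" where
  "contains_cycle E C ps \<longleftrightarrow> is_cycle E ps \<and> set ps \<subseteq> C"

definition uniqueness_at :: "point set \<Rightarrow> point \<Rightarrow> bool" where
  "uniqueness_at E p \<longleftrightarrow>
     (\<forall>v. semistatic E v \<longrightarrow>
        (\<forall>h g h' g'. portfolio_position E v h g \<longrightarrow> portfolio_position E v h' g' \<longrightarrow>
            h (fst p) = h' (fst p) \<and> g (snd p) = g' (snd p)))"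

definition convergence_at :: "point set \<Rightarrow> point \<Rightarrow> bool" where
  "convergence_at E p \<longleftrightarrow>
     (\<forall>(v :: nat \<Rightarrow> point \<Rightarrow> real) h g.
        (\<forall>n. semistatic E (v n) \<and> portfolio_position E (v n) (h n) (g n)) \<longrightarrow>
        (\<forall>q\<in>E. convergent (\<lambda>n. v n q)) \<longrightarrow>
        convergent (\<lambda>n. h n (fst p)) \<and> convergent (\<lambda>n. g n (snd p)))"

end

theory Submission
  imports Defs
begin

text \<open>Call a functional \<open>\<Phi> h g\<close> of portfolio positions observable if it is a fixed finite
  linear combination of the values \<open>v (x, y) = h x * (y - x) + g y\<close>, \<open>(x, y) \<in> E\<close>; it then
  takes the same value on all positions of \<open>v\<close>, and converges whenever \<open>v\<close> converges
  pointwise on \<open>E\<close>. If \<open>h x\<close> is observable and \<open>(x, y), (x', y) \<in> E\<^sub>o\<close>, then so are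
  \<open>g y = v (x, y) - h x * (y - x)\<close> and \<open>h x' = (v (x', y) - g y) / (y - x')\<close>; hence observability
  of \<open>h\<close> propagates along paths. Around a cycle the differences \<open>v (x\<^sub>i\<^sub>+\<^sub>1, y\<^sub>i) - v (x\<^sub>i, y\<^sub>i)\<close>
  telescope to \<open>h x\<^sub>1 * (\<Prod>(y\<^sub>i - x\<^sub>i\<^sub>+\<^sub>1) - \<Prod>(y\<^sub>i - x\<^sub>i))\<close>, so \<open>h x\<^sub>1\<close> is observable
  when the cycle is identifying.\<close>

inductive observable :: "point set \<Rightarrow> ((real \<Rightarrow> real) \<Rightarrow> (real \<Rightarrow> real) \<Rightarrow> real) \<Rightarrow> bool"
  for E where
  observable_zero: "observable E (\<lambda>h g. 0)"
| observable_value: "(x, y) \<in> E \<Longrightarrow> observable E (\<lambda>h g. h x * (y - x) + g y)"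
| observable_add: "observable E \<Phi> \<Longrightarrow> observable E \<Psi> \<Longrightarrow> observable E (\<lambda>h g. \<Phi> h g + \<Psi> h g)"
| observable_scale: "observable E \<Phi> \<Longrightarrow> observable E (\<lambda>h g. c * \<Phi> h g)"

lemma observable_cong:
  assumes "observable E \<Phi>" and "\<And>h g. \<Phi> h g = \<Psi> h g"
  shows "observable E \<Psi>"
proof -
  have "\<Phi> = \<Psi>" using assms(2) by blast
  with assms(1) show ?thesis by simp
qed

lemma observable_diff:
  assumes "observable E \<Phi>" and "observable E \<Psi>"
  shows "observable E (\<lambda>h g. \<Phi> h g - \<Psi> h g)"
  using observable_add[OF assms(1) observable_scale[OF assms(2), of "-1"]] by (rule observable_cong) simp

lemma observable_unique:
  assumes "observable E \<Phi>"
    and "portfolio_position E v h g" and "portfolio_position E v h' g'"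
  shows "\<Phi> h g = \<Phi> h' g'"
  using assms(1)
proof induction
  case (observable_value x y)
  then show ?case using assms(2,3) unfolding portfolio_position_def by fastforce
qed simp_all

lemma observable_convergent:
  assumes "observable E \<Phi>"
    and "\<And>n. portfolio_position E (v n) (h n) (g n)"
    and "\<forall>q\<in>E. convergent (\<lambda>n. v n q)"
  shows "convergent (\<lambda>n. \<Phi> (h n) (g n))"
  using assms(1)
proof induction
  case (observable_value x y)
  have "v n (x, y) = h n x * (y - x) + g n y" for n
    using assms(2)[of n] observable_value unfolding portfolio_position_def by fastforce
  with assms(3) observable_value show ?case by (metis (no_types, lifting) ext)
next
  case (observable_add \<Phi> \<Psi>)
  from observable_add.IH show ?case by (rule convergent_add)
next
  case (observable_scale \<Phi> c)
  then show ?case by (intro convergent_mult convergent_const)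
qed (rule convergent_const)

lemma uniqueness_convergence_if_observable:
  assumes "observable E (\<lambda>h g. h (fst p))" and "observable E (\<lambda>h g. g (snd p))"
  shows "uniqueness_at E p \<and> convergence_at E p"
  using observable_unique[OF assms(1)] observable_unique[OF assms(2)]
    observable_convergent[OF assms(1)] observable_convergent[OF assms(2)]
  unfolding uniqueness_at_def convergence_at_def by blast

lemma observable_g_if_h:
  assumes "(x, y) \<in> E" and "observable E (\<lambda>h g. h x)"
  shows "observable E (\<lambda>h g. g y)"
  using observable_diff[OF observable_value[OF assms(1)] observable_scale[OF assms(2), of "y - x"]]
  by (rule observable_cong) simp

lemma observable_h_if_g:
  assumes "(x, y) \<in> E" and "x \<noteq> y" and "observable E (\<lambda>h g. g y)"
  shows "observable E (\<lambda>h g. h x)"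
  using observable_scale[OF observable_diff[OF observable_value[OF assms(1)] assms(3)], of "1 / (y - x)"]
  by (rule observable_cong) (use assms(2) in simp)

lemma observable_h_step:
  assumes "(x, y) \<in> E" and "(x', y) \<in> Eo E" and "observable E (\<lambda>h g. h x)"
  shows "observable E (\<lambda>h g. h x')"
  using assms observable_g_if_h observable_h_if_g unfolding Eo_def by auto

lemma all_le_Suc_conv: "(\<forall>i \<le> Suc n. P i) \<longleftrightarrow> P 0 \<and> (\<forall>i \<le> n. P (Suc i))"
  by (simp only: less_Suc_eq_le [symmetric] All_less_Suc2)

lemma is_path_Nil:
  "is_path E p [] q \<longleftrightarrow> p \<in> Eo E \<and> q \<in> Eo E \<and> (fst q, snd p) \<in> Eo E"
  unfolding is_path_def Let_def by (simp add: all_le_Suc_conv)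

lemma is_path_Cons:
  "is_path E p (r # ps) q \<longleftrightarrow> p \<in> Eo E \<and> (fst r, snd p) \<in> Eo E \<and> is_path E r ps q"
  unfolding is_path_def Let_def by (simp add: all_le_Suc_conv) blast

lemma observable_h_along_path:
  assumes "is_path E p ps q" and "observable E (\<lambda>h g. h (fst p))"
  shows "observable E (\<lambda>h g. h (fst q))"
  using assms
proof (induction ps arbitrary: p)
  case Nil
  then show ?case using observable_h_step[of "fst p" "snd p"] by (auto simp: is_path_Nil Eo_def)
next
  case (Cons r ps)
  then have "p \<in> E" and "(fst r, snd p) \<in> Eo E" and "is_path E r ps q"
    by (auto simp: is_path_Cons Eo_def)
  with Cons.prems(2) have "observable E (\<lambda>h g. h (fst r))"
    using observable_h_step[of "fst p" "snd p"] by simp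
  with \<open>is_path E r ps q\<close> show ?case by (rule Cons.IH)
qed

lemma observable_chain:
  assumes "\<forall>j<m. (X j, Y j) \<in> E" and "\<forall>j<m. (X (Suc j), Y j) \<in> E"
  shows "observable E (\<lambda>h g. h (X m) * (\<Prod>j<m. Y j - X (Suc j)) - h (X 0) * (\<Prod>j<m. Y j - X j))"
  using assms
proof (induction m)
  case 0
  show ?case by (rule observable_cong[OF observable_zero]) simp
next
  case (Suc m)
  let ?a = "Y m - X m" and ?b = "Y m - X (Suc m)"
  let ?A = "\<Prod>j<m. Y j - X j" and ?B = "\<Prod>j<m. Y j - X (Suc j)"
  have "observable E (\<lambda>h g. h (X m) * ?B - h (X 0) * ?A)"
    using Suc by simp
  moreover have "observable E (\<lambda>h g. (h (X (Suc m)) * ?b + g (Y m)) - (h (X m) * ?a + g (Y m)))"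
    using Suc.prems by (intro observable_diff observable_value) simp_all
  ultimately have "observable E (\<lambda>h g. ?a * (h (X m) * ?B - h (X 0) * ?A)
      + ?B * ((h (X (Suc m)) * ?b + g (Y m)) - (h (X m) * ?a + g (Y m))))"
    by (intro observable_add observable_scale)
  then show ?case by (rule observable_cong) (simp add: algebra_simps)
qed

lemma observable_h_closed_chain:
  assumes "\<forall>j<k. (X j, Y j) \<in> E" and "\<forall>j<k. (X (Suc j), Y j) \<in> E" and "X k = X 0"
    and "(\<Prod>j<k. Y j - X j) \<noteq> (\<Prod>j<k. Y j - X (Suc j))"
  shows "observable E (\<lambda>h g. h (X 0))"
proof -
  let ?A = "\<Prod>j<k. Y j - X j" and ?B = "\<Prod>j<k. Y j - X (Suc j)"
  have "observable E (\<lambda>h g. h (X 0) * ?B - h (X 0) * ?A)"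
    using observable_chain[OF assms(1,2)] assms(3) by simp
  then have "observable E (\<lambda>h g. 1 / (?B - ?A) * (h (X 0) * ?B - h (X 0) * ?A))"
    by (rule observable_scale)
  then show ?thesis by (rule observable_cong) (use assms(4) in \<open>simp add: field_simps\<close>)
qed

lemma cycle_edges:
  assumes "is_cycle E ps" and "j < length ps"
  shows "ps ! j \<in> Eo E" and "(fst (ps ! (Suc j mod length ps)), snd (ps ! j)) \<in> Eo E"
proof -
  define xs where "xs = fst (hd ps) # map fst ps @ [fst (hd ps)]"
  define ys where "ys = snd (hd ps) # map snd ps @ [snd (hd ps)]"
  have ne: "ps \<noteq> []" using assms(1) unfolding is_cycle_def by simp
  have "\<forall>i \<le> length ps + 1. (xs ! i, ys ! i) \<in> Eo E"
    and "\<forall>i \<le> length ps. (xs ! (i + 1), ys ! i) \<in> Eo E"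
    using assms(1) unfolding is_cycle_def is_path_def xs_def ys_def Let_def by auto
  then have "(xs ! Suc j, ys ! Suc j) \<in> Eo E" and "(xs ! Suc (Suc j), ys ! Suc j) \<in> Eo E"
    using assms(2) by simp_all
  moreover have "xs ! Suc j = fst (ps ! j)" and "ys ! Suc j = snd (ps ! j)"
    using assms(2) by (simp_all add: xs_def ys_def nth_append)
  moreover have "xs ! Suc (Suc j) = fst (ps ! (Suc j mod length ps))"
    using assms(2) ne by (cases "Suc j = length ps") (simp_all add: xs_def nth_append hd_conv_nth)
  ultimately show "ps ! j \<in> Eo E" and "(fst (ps ! (Suc j mod length ps)), snd (ps ! j)) \<in> Eo E"
    by simp_all
qed

lemma observable_h_cycle:
  assumes "is_cycle E ps" and "identifying ps"
  shows "observable E (\<lambda>h g. h (fst (hd ps)))"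
proof -
  define k where "k = length ps"
  define X where "X i = fst (ps ! (i mod k))" for i
  define Y where "Y i = snd (ps ! i)" for i
  have "k > 0" using assms(1) unfolding is_cycle_def k_def by simp
  have "observable E (\<lambda>h g. h (X 0))"
  proof (rule observable_h_closed_chain)
    show "\<forall>j<k. (X j, Y j) \<in> E" and "\<forall>j<k. (X (Suc j), Y j) \<in> E"
      using cycle_edges[OF assms(1)] unfolding X_def Y_def k_def Eo_def by auto
    show "X k = X 0" by (simp add: X_def)
    have "(\<Prod>j<k. Y j - X j) = (\<Prod>i<k. map snd ps ! i - map fst ps ! i)"
      by (rule prod.cong) (simp_all add: X_def Y_def k_def)
    moreover have "(\<Prod>j<k. Y j - X (Suc j)) = (\<Prod>i<k. map snd ps ! i - map fst ps ! ((i + 1) mod k))"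
      using \<open>k > 0\<close> by (intro prod.cong) (simp_all add: X_def Y_def k_def)
    ultimately show "(\<Prod>j<k. Y j - X j) \<noteq> (\<Prod>j<k. Y j - X (Suc j))"
      using assms(2) unfolding identifying_def Let_def k_def by simp
  qed
  then show ?thesis using \<open>k > 0\<close> by (simp add: X_def hd_conv_nth k_def)
qed

theorem corollary2p7:
  fixes E C :: "(real \<times> real) set"
  assumes "connected_in_Eo E C"
    and "\<exists>ps. contains_cycle E C ps \<and> identifying ps"
  shows "\<forall>p\<in>C. uniqueness_at E p \<and> convergence_at E p"
proof
  fix p assume "p \<in> C"
  obtain ps where cycle: "is_cycle E ps" "identifying ps" and "set ps \<subseteq> C"
    using assms(2) unfolding contains_cycle_def by blast
  then have "hd ps \<in> C" unfolding is_cycle_def by auto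
  then obtain qs where "is_path E (hd ps) qs p"
    using assms(1) \<open>p \<in> C\<close> unfolding connected_in_Eo_def connected_pts_def by blast
  then have h_obs: "observable E (\<lambda>h g. h (fst p))"
    using observable_h_cycle[OF cycle] by (rule observable_h_along_path)
  have "(fst p, snd p) \<in> E"
    using assms(1) \<open>p \<in> C\<close> unfolding connected_in_Eo_def Eo_def by auto
  then have "observable E (\<lambda>h g. g (snd p))"
    using h_obs by (rule observable_g_if_h)
  with h_obs show "uniqueness_at E p \<and> convergence_at E p"
    by (rule uniqueness_convergence_if_observable)
qed

end
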